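(* Let $\boldsymbol\eta$ be a standard max-stable process with generator $\mathbf Z$, and let $G(f)=P(\boldsymbol\eta\le f)=\exp(-\|f\|_D)$, $f\in\bar E^-[0,1]$, be its functional distribution function. Then: (i) $G$ is continuous with respect to the sup-norm $\|\cdot\|_\infty$; (ii) for every $f\in\bar E^-[0,1]$ we have $P(\boldsymbol\eta\le f)=P(\boldsymbol\eta<f)$; in particular, the sets $\{g\in\bar C^-[0,1]: g(t)\le f(t)\text{ for all }t\in[0,1]\}$ are continuity sets of the distribution of $\boldsymbol\eta$ on $(\bar C^-[0,1],\|\cdot\|_\infty)$.
   Context: $E[0,1]$: bounded functions on $[0,1]$ with finitely many discontinuities; $\bar E^-[0,1]=\{f\in E[0,1]:f\le 0\}$; $\bar C^-[0,1]=\{f\in C[0,1]:f\le 0\}$. $\boldsymbol\eta\le f$ (resp. $<$) means $\eta_t\le f(t)$ (resp. $<$) for all $t\in[0,1]$. A generator is a process $\mathbf Z$ with continuous nonnegative paths, $\max_t Z_t=m$ a.s. for a constant $m\in[1,\infty)$, and $E(Z_t)=1$ for all $t$; the $D$-norm is $\|f\|_D=E(\sup_{t\in[0,1]}(|f(t)|Z_t))$. A standard max-stable process with generator $\mathbf Z$ is a process with paths in $\bar C^-[0,1]$ that is max-stable (for iid copies $\boldsymbol\eta_i$ and each $n$ there are $a_n>0,b_n\in C[0,1]$ with $\boldsymbol\eta=_D\max_{i\le n}(\boldsymbol\eta_i-b_n)/a_n$), has margins $P(\eta_t\le x)=e^x$, $x\le0$, and satisfies $P(\max_{t\in K_j}\eta_t\le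 x_j,1\le j\le d)=\exp(-E(\max_j|x_j|\max_{t\in K_j}Z_t))$ for compact $K_j\subset[0,1]$, $x_j\le 0$; equivalently $P(\boldsymbol\eta\le f)=\exp(-\|f\|_D)$ for $f\in\bar E^-[0,1]$. *)

theory Defs
  imports "HOL-Probability.Probability"
begin

text \<open>Functions on [0,1] are represented as real => real; only values on {0..1} matter.\<close>

definition E01 :: "(real \<Rightarrow> real) \<Rightarrow> bool" where
  "E01 f \<longleftrightarrow> bounded (f ` {0..1}) \<and>
     finite {t \<in> {0..1}. \<not> continuous (at t within {0..1}) f}"

definition Eneg :: "(real \<Rightarrow> real) set" where
  "Eneg = {f. E01 f \<and> (\<forall>t\<in>{0..1}. f t \<le> 0)}"

definition Cneg :: "(real \<Rightarrow> real) set" where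
  "Cneg = {g. continuous_on {0..1} g \<and> (\<forall>t\<in>{0..1}. g t \<le> 0)}"

definition supdist :: "(real \<Rightarrow> real) \<Rightarrow> (real \<Rightarrow> real) \<Rightarrow> real" where
  "supdist g h = (SUP t\<in>{0..1}. \<bar>g t - h t\<bar>)"

definition rel_boundary_sup :: "(real \<Rightarrow> real) set \<Rightarrow> (real \<Rightarrow> real) set \<Rightarrow> (real \<Rightarrow> real) set" where
  "rel_boundary_sup S A = {g \<in> S. \<forall>e>0. (\<exists>h\<in>S \<inter> A. supdist g h < e) \<and> (\<exists>h\<in>S - A. supdist g h < e)}"

definition generator :: "'b measure \<Rightarrow> ('b \<Rightarrow> real \<Rightarrow> real) \<Rightarrow> real \<Rightarrow> bool" where
  "generator N Z m \<longleftrightarrow> prob_space N \<and> 1 \<le> m \<and>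
     (\<forall>\<omega>\<in>space N. continuous_on {0..1} (Z \<omega>) \<and> (\<forall>t\<in>{0..1}. 0 \<le> Z \<omega> t)) \<and>
     (AE \<omega> in N. (SUP t\<in>{0..1}. Z \<omega> t) = m) \<and>
     (\<forall>t\<in>{0..1}. (\<lambda>\<omega>. Z \<omega> t) \<in> borel_measurable N \<and> integrable N (\<lambda>\<omega>. Z \<omega> t) \<and>
        (\<integral>\<omega>. Z \<omega> t \<partial>N) = 1)"

definition Dnorm :: "'b measure \<Rightarrow> ('b \<Rightarrow> real \<Rightarrow> real) \<Rightarrow> (real \<Rightarrow> real) \<Rightarrow> real" where
  "Dnorm N Z f = (\<integral>\<omega>. (SUP t\<in>{0..1}. \<bar>f t\<bar> * Z \<omega> t) \<partial>N)"

text \<open>Max-stability is expressed through the finite-dimensional distribution functions: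
  for iid copies, P(max_i (eta_i - b)/a \<le> x on ts) = P(eta \<le> a x + b on ts)^n.\<close>
definition std_max_stable :: "'a measure \<Rightarrow> ('a \<Rightarrow> real \<Rightarrow> real) \<Rightarrow> 'b measure \<Rightarrow> ('b \<Rightarrow> real \<Rightarrow> real) \<Rightarrow> bool" where
  "std_max_stable M eta N Z \<longleftrightarrow> prob_space M \<and>
     (\<forall>t\<in>{0..1}. (\<lambda>\<omega>. eta \<omega> t) \<in> borel_measurable M) \<and>
     (\<forall>\<omega>\<in>space M. eta \<omega> \<in> Cneg) \<and>
     (\<forall>n::nat. n \<ge> 1 \<longrightarrow> (\<exists>a>0. \<exists>b. continuous_on {0..1} b \<and>
        (\<forall>(k::nat) (ts::nat \<Rightarrow> real) (x::nat \<Rightarrow> real). (\<forall>j<k. ts j \<in> {0..1}) \<longrightarrow>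
           measure M {\<omega>\<in>space M. \<forall>j<k. eta \<omega> (ts j) \<le> x j}
           = (measure M {\<omega>\<in>space M. \<forall>j<k. eta \<omega> (ts j) \<le> a * x j + b (ts j)}) ^ n))) \<and>
     (\<forall>t\<in>{0..1}. \<forall>x\<le>0. measure M {\<omega>\<in>space M. eta \<omega> t \<le> x} = exp x) \<and>
     (\<forall>(d::nat) (K::nat \<Rightarrow> real set) (x::nat \<Rightarrow> real).
        d \<ge> 1 \<and> (\<forall>j<d. compact (K j) \<and> K j \<noteq> {} \<and> K j \<subseteq> {0..1} \<and> x j \<le> 0) \<longrightarrow>
        measure M {\<omega>\<in>space M. \<forall>j<d. (SUP t\<in>K j. eta \<omega> t) \<le> x j}
        = exp (- (\<integral>\<omega>. (MAX j\<in>{..<d}. \<bar>x j\<bar> * (SUP t\<in>K j. Z \<omega> t)) \<partial>N)))"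

end

theory Submission
  imports Defs
begin

text \<open>Almost surely \<open>sup\<^sub>t Z\<^sub>t = m\<close>, so the D-norm is \<open>m\<close>-Lipschitz for the sup-distance, and
  so is \<open>G = exp (- \<parallel>\<cdot>\<parallel>\<^sub>D)\<close> because \<open>exp (- x)\<close> is 1-Lipschitz on \<open>[0, \<infinity>)\<close>; this is (i).
  In particular \<open>G (f - \<epsilon>) \<rightarrow> G f\<close> as \<open>\<epsilon> \<down> 0\<close>. As \<open>{\<eta> \<le> f - \<epsilon>} \<subseteq> {\<eta> < f} \<subseteq> {\<eta> \<le> f}\<close>, this gives (ii).
  A path on the relative boundary of \<open>{g \<le> f}\<close> in \<open>C\<^sup>-\<close> stays below \<open>f\<close> but comes arbitrarily
  close to it at points where \<open>f < 0\<close>; hence the boundary event lies in \<open>{\<eta> \<le> f} - {\<eta> \<le> f - \<epsilon>}\<close>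
  and has probability at most \<open>G f - G (f - \<epsilon>)\<close>.

  All these events are measurable because paths are continuous: their order relation with \<open>f\<close>
  can be tested at the rationals and the finitely many discontinuities of \<open>f\<close>, with, for strict
  inequality, a uniform rational margin on each rational interval avoiding the discontinuities.\<close>

definition discontinuities :: "(real \<Rightarrow> real) \<Rightarrow> real set" where
  "discontinuities f = {t \<in> {0..1}. \<not> continuous (at t within {0..1}) f}"

lemma E01_finite_discontinuities: "E01 f \<Longrightarrow> finite (discontinuities f)"
  unfolding E01_def discontinuities_def by simp

lemma E01_obtain_bound:
  assumes "E01 f"
  obtains B where "B \<ge> 0" "\<And>t. t \<in> {0..1} \<Longrightarrow> \<bar>f t\<bar> \<le> B"
proof -
  obtain B where "\<forall>t\<in>{0..1}. \<bar>f t\<bar> \<le> B"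
    using assms unfolding E01_def by (auto simp: bounded_iff)
  then show thesis using that[of B] by force
qed

lemma E01_diff_const:
  assumes "E01 f"
  shows "E01 (\<lambda>t. f t - c)"
proof -
  have "continuous (at t within {0..1}) (\<lambda>t. f t - c) \<longleftrightarrow> continuous (at t within {0..1}) f" for t
    using continuous_diff[OF _ continuous_const, of _ "\<lambda>t. f t - c" "- c"]
      continuous_diff[OF _ continuous_const, of _ f c] by auto
  moreover have "bounded ((\<lambda>t. f t - c) ` {0..1})"
    using assms bounded_translation[of "f ` {0..1}" "- c"] unfolding E01_def by (simp add: image_image)
  ultimately show ?thesis using assms unfolding E01_def by simp
qed

lemma Eneg_diff_const: "f \<in> Eneg \<Longrightarrow> c \<ge> 0 \<Longrightarrow> (\<lambda>t. f t - c) \<in> Eneg"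
  unfolding Eneg_def using E01_diff_const by fastforce

lemma Cneg_bounded: "g \<in> Cneg \<Longrightarrow> bounded (g ` {0..1})"
  unfolding Cneg_def by (intro compact_imp_bounded compact_continuous_image) auto

lemma abs_diff_le_supdist:
  assumes "bounded (g ` {0..1})" "bounded (f ` {0..1})" "t \<in> {0..1}"
  shows "\<bar>g t - f t\<bar> \<le> supdist g f"
proof -
  obtain B1 B2 where "\<forall>x\<in>{0..1}. \<bar>g x\<bar> \<le> B1" "\<forall>x\<in>{0..1}. \<bar>f x\<bar> \<le> B2"
    using assms(1,2) by (auto simp: bounded_iff)
  then have "bdd_above ((\<lambda>t. \<bar>g t - f t\<bar>) ` {0..1})"
    by (intro bdd_aboveI[of _ "B1 + B2"]) force
  then show ?thesis unfolding supdist_def using assms(3) by (intro cSUP_upper) auto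
qed

lemma supdist_commute: "supdist g f = supdist f g"
  unfolding supdist_def by (simp add: abs_minus_commute)

lemma supdist_diff_const: "c \<ge> 0 \<Longrightarrow> supdist (\<lambda>t. f t - c) f = c"
  unfolding supdist_def by simp

lemma abs_exp_neg_diff_le:
  fixes a b :: real
  assumes "0 \<le> a" "0 \<le> b"
  shows "\<bar>exp (- a) - exp (- b)\<bar> \<le> \<bar>a - b\<bar>"
proof -
  have *: "exp (- x) - exp (- y) \<le> y - x" if "0 \<le> x" "x \<le> y" for x y :: real
  proof -
    have "exp (- x) - exp (- y) = exp (- x) * (1 - exp (- (y - x)))"
      by (simp add: algebra_simps flip: exp_add)
    also have "\<dots> \<le> 1 - exp (- (y - x))"
      using that by (intro mult_left_le_one_le) auto
    also have "\<dots> \<le> y - x"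
      using exp_ge_add_one_self[of "x - y"] by (simp add: algebra_simps)
    finally show ?thesis .
  qed
  show ?thesis using *[of a b] *[of b a] assms by (cases "a \<le> b") auto
qed

section \<open>Comparing continuous functions with \<open>f\<close> on countably many points\<close>

lemma ex_less_iff_ex_less_Rats_Un:
  fixes \<phi> :: "real \<Rightarrow> real"
  assumes "a < b"
    and cont: "\<And>t. t \<in> {a..b} \<Longrightarrow> t \<notin> D \<Longrightarrow> continuous (at t within {a..b}) \<phi>"
  shows "(\<exists>t\<in>{a..b}. \<phi> t < c) \<longleftrightarrow> (\<exists>t\<in>{a..b} \<inter> (\<rat> \<union> D). \<phi> t < c)"
proof
  assume "\<exists>t\<in>{a..b}. \<phi> t < c"
  then obtain t where t: "t \<in> {a..b}" "\<phi> t < c" by blast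
  show "\<exists>t\<in>{a..b} \<inter> (\<rat> \<union> D). \<phi> t < c"
  proof (cases "t \<in> D")
    case True
    then show ?thesis using t by blast
  next
    case False
    obtain \<delta> where \<delta>: "\<delta> > 0"
      "\<And>s. s \<in> {a..b} \<Longrightarrow> dist s t < \<delta> \<Longrightarrow> dist (\<phi> s) (\<phi> t) < c - \<phi> t"
      using cont[OF t(1) False] t(2) unfolding continuous_within_eps_delta
      by (metis diff_gt_0_iff_gt)
    have "max a (t - \<delta>) < min b (t + \<delta>)" using \<open>a < b\<close> t(1) \<delta>(1) by auto
    then obtain s where s: "s \<in> \<rat>" "max a (t - \<delta>) < s" "s < min b (t + \<delta>)"
      using Rats_dense_in_real by blast
    then have "s \<in> {a..b}" "dist s t < \<delta>" by (auto simp: dist_real_def)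
    then have "\<phi> s < c" using \<delta>(2) by (fastforce simp: dist_real_def)
    then show ?thesis using s(1) \<open>s \<in> {a..b}\<close> by blast
  qed
qed auto

definition sample_points :: "(real \<Rightarrow> real) \<Rightarrow> real set" where
  "sample_points f = {0..1} \<inter> (\<rat> \<union> discontinuities f)"

lemma sample_points_subset: "sample_points f \<subseteq> {0..1}"
  unfolding sample_points_def by blast

lemma countable_sample_points: "E01 f \<Longrightarrow> countable (sample_points f)"
  unfolding sample_points_def Int_Un_distrib
  by (intro countable_Un countable_Int2 countable_rat countable_finite E01_finite_discontinuities)

lemma ex_less_iff_ex_less_sample_points:
  fixes \<phi> :: "real \<Rightarrow> real"
  assumes "\<And>t. t \<in> {0..1} \<Longrightarrow> continuous (at t within {0..1}) f \<Longrightarrow>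
      continuous (at t within {0..1}) \<phi>"
  shows "(\<exists>t\<in>{0..1}. \<phi> t < c) \<longleftrightarrow> (\<exists>t\<in>sample_points f. \<phi> t < c)"
  unfolding sample_points_def
  by (rule ex_less_iff_ex_less_Rats_Un) (auto simp: discontinuities_def intro: assms)

lemma cSUP_eq_cSUP_sample_points:
  fixes \<phi> :: "real \<Rightarrow> real"
  assumes bdd: "bdd_above (\<phi> ` {0..1})"
    and cont: "\<And>t. t \<in> {0..1} \<Longrightarrow> continuous (at t within {0..1}) f \<Longrightarrow>
      continuous (at t within {0..1}) \<phi>"
  shows "(SUP t\<in>{0..1}. \<phi> t) = (SUP t\<in>sample_points f. \<phi> t)"
proof (rule antisym)
  let ?S = "SUP t\<in>sample_points f. \<phi> t"
  have ne: "sample_points f \<noteq> {}" using Rats_0 unfolding sample_points_def by fastforce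
  have bdd': "bdd_above (\<phi> ` sample_points f)"
    using bdd sample_points_subset by (rule bdd_above_mono[OF _ image_mono])
  have "(\<exists>t\<in>{0..1}. - \<phi> t < - ?S) \<longleftrightarrow> (\<exists>t\<in>sample_points f. - \<phi> t < - ?S)"
    using cont by (intro ex_less_iff_ex_less_sample_points continuous_minus)
  moreover have "\<not> (\<exists>t\<in>sample_points f. - \<phi> t < - ?S)"
    using cSUP_upper[OF _ bdd'] by force
  ultimately show "(SUP t\<in>{0..1}. \<phi> t) \<le> ?S" by (intro cSUP_least) (auto simp: not_less)
  show "?S \<le> (SUP t\<in>{0..1}. \<phi> t)"
    using cSUP_subset_mono[OF ne bdd sample_points_subset] by simp
qed

lemma le_iff_le_on_sample_points:
  assumes "continuous_on {0..1} g"
  shows "(\<forall>t\<in>{0..1}. g t \<le> f t) \<longleftrightarrow> (\<forall>t\<in>sample_points f. g t \<le> f t)"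
proof -
  have "(\<exists>t\<in>{0..1}. f t - g t < 0) \<longleftrightarrow> (\<exists>t\<in>sample_points f. f t - g t < 0)"
    using assms
    by (intro ex_less_iff_ex_less_sample_points continuous_diff)
      (auto simp: continuous_on_eq_continuous_within)
  then show ?thesis by (meson diff_less_0_iff_less not_le)
qed

lemma obtain_Rats_interval_avoiding:
  fixes t :: real
  assumes "t \<in> {0..1}" "finite D" "t \<notin> D"
  obtains a b where "a \<in> \<rat>" "b \<in> \<rat>" "a < b" "t \<in> {a..b}" "{a..b} \<subseteq> {0..1} - D"
proof -
  obtain \<delta> where \<delta>: "\<delta> > 0" "\<And>x. x \<in> D \<Longrightarrow> x \<noteq> t \<Longrightarrow> \<delta> \<le> dist t x"
    using finite_set_avoid[OF assms(2)] by blast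
  obtain a b where ab: "a \<in> \<rat>" "t - \<delta> < a" "a < t" "b \<in> \<rat>" "t < b" "b < t + \<delta>"
    using Rats_dense_in_real[of "t - \<delta>" t] Rats_dense_in_real[of t "t + \<delta>"] \<delta>(1) by auto
  have "{max a 0..min b 1} \<subseteq> {0..1} - D"
    using \<delta>(2) ab assms(3) by (fastforce simp: dist_real_def)
  moreover have "max a 0 \<in> \<rat>" "min b 1 \<in> \<rat>"
    using ab by (auto simp: max_def min_def)
  ultimately show thesis
    using that[of "max a 0" "min b 1"] ab assms(1) by auto
qed

lemma continuous_pos_imp_Rats_lower_bound:
  fixes h :: "real \<Rightarrow> real"
  assumes "continuous_on {a..b} h" "\<And>s. s \<in> {a..b} \<Longrightarrow> 0 < h s"
  shows "\<exists>q\<in>\<rat> \<inter> {0<..}. \<forall>s\<in>{a..b}. q \<le> h s"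
proof (cases "a \<le> b")
  case True
  then obtain t0 where t0: "t0 \<in> {a..b}" "\<And>s. s \<in> {a..b} \<Longrightarrow> h t0 \<le> h s"
    using continuous_attains_inf[OF _ _ assms(1)] by auto
  obtain q where q: "q \<in> \<rat>" "0 < q" "q < h t0"
    using Rats_dense_in_real assms(2)[OF t0(1)] by blast
  have "q \<le> h s" if "s \<in> {a..b}" for s using t0(2)[OF that] q(3) by simp
  then show ?thesis using q(1,2) by blast
next
  case False
  then show ?thesis by (intro bexI[of _ 1]) auto
qed

lemma le_if_le_on_Rats:
  fixes h :: "real \<Rightarrow> real"
  assumes "a < b" "continuous_on {a..b} h" "\<And>s. s \<in> \<rat> \<inter> {a..b} \<Longrightarrow> q \<le> h s" "t \<in> {a..b}"
  shows "q \<le> h t"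
proof -
  have "(\<exists>s\<in>{a..b}. h s < q) \<longleftrightarrow> (\<exists>s\<in>{a..b} \<inter> (\<rat> \<union> {}). h s < q)"
    using assms(2) by (intro ex_less_iff_ex_less_Rats_Un[OF assms(1)])
      (auto simp: continuous_on_eq_continuous_within)
  also have "\<dots> \<longleftrightarrow> False" using assms(3) by (auto simp: not_less)
  finally show ?thesis using assms(4) by (meson not_less)
qed

lemma less_iff_on_Rats_intervals:
  assumes g: "continuous_on {0..1} g" and fin: "finite (discontinuities f)"
  shows "(\<forall>t\<in>{0..1}. g t < f t) \<longleftrightarrow>
    (\<forall>t\<in>discontinuities f. g t < f t) \<and>
    (\<forall>(a, b)\<in>{(a, b)\<in>\<rat> \<times> \<rat>. {a..b} \<subseteq> {0..1} - discontinuities f}.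
       \<exists>q\<in>\<rat> \<inter> {0<..}. \<forall>s\<in>\<rat> \<inter> {a..b}. q \<le> f s - g s)"
    (is "?lhs \<longleftrightarrow> ?on_jumps \<and> ?on_intervals")
proof -
  have cont: "continuous_on {a..b} (\<lambda>s. f s - g s)"
    if "{a..b} \<subseteq> {0..1} - discontinuities f" for a b
    unfolding continuous_on_eq_continuous_within
  proof
    fix t assume "t \<in> {a..b}"
    then have "continuous (at t within {0..1}) (\<lambda>s. f s - g s)"
      using that g by (intro continuous_diff) (auto simp: discontinuities_def continuous_on_eq_continuous_within)
    then show "continuous (at t within {a..b}) (\<lambda>s. f s - g s)"
      by (rule continuous_within_subset) (use that in blast)
  qed
  show ?thesis
  proof
    assume lhs: ?lhs
    have ?on_intervals
    proof clarify
      fix a b assume ab: "{a..b} \<subseteq> {0..1} - discontinuities f"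
      then have "\<exists>q\<in>\<rat> \<inter> {0<..}. \<forall>s\<in>{a..b}. q \<le> f s - g s"
        using lhs by (intro continuous_pos_imp_Rats_lower_bound cont) auto
      then show "\<exists>q\<in>\<rat> \<inter> {0<..}. \<forall>s\<in>\<rat> \<inter> {a..b}. q \<le> f s - g s" by blast
    qed
    moreover have ?on_jumps using lhs by (auto simp: discontinuities_def)
    ultimately show "?on_jumps \<and> ?on_intervals" by blast
  next
    assume rhs: "?on_jumps \<and> ?on_intervals"
    show ?lhs
    proof
      fix t :: real assume t: "t \<in> {0..1}"
      show "g t < f t"
      proof (cases "t \<in> discontinuities f")
        case False
        obtain a b where ab: "a \<in> \<rat>" "b \<in> \<rat>" "a < b" "t \<in> {a..b}"
          "{a..b} \<subseteq> {0..1} - discontinuities f"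
          using obtain_Rats_interval_avoiding[OF t fin False] .
        have "\<exists>q\<in>\<rat> \<inter> {0<..}. \<forall>s\<in>\<rat> \<inter> {a..b}. q \<le> f s - g s"
          using rhs ab(1,2,5) by blast
        then obtain q where "0 < q" "\<And>s. s \<in> \<rat> \<inter> {a..b} \<Longrightarrow> q \<le> f s - g s"
          by blast
        then have "q \<le> f t - g t" by (intro le_if_le_on_Rats[OF \<open>a < b\<close> cont[OF ab(5)] _ ab(4)])
        then show ?thesis using \<open>0 < q\<close> by simp
      qed (use rhs in blast)
    qed
  qed
qed

section \<open>The relative boundary of \<open>{g \<le> f}\<close>\<close>

lemma rel_boundary_sup_le_iff:
  assumes g: "g \<in> Cneg"
  shows "g \<in> rel_boundary_sup Cneg {h\<in>Cneg. \<forall>t\<in>{0..1}. h t \<le> f t} \<longleftrightarrow>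
    (\<forall>t\<in>{0..1}. g t \<le> f t) \<and> (\<forall>e>0. \<exists>t\<in>{0..1}. f t < 0 \<and> f t < g t + e)"
  (is "_ \<longleftrightarrow> ?below \<and> ?touching")
proof
  assume bd: "g \<in> rel_boundary_sup Cneg {h\<in>Cneg. \<forall>t\<in>{0..1}. h t \<le> f t}"
  have near: "\<bar>g t - h t\<bar> < e" if "h \<in> Cneg" "supdist g h < e" "t \<in> {0..1}" for h e t
    using abs_diff_le_supdist[OF Cneg_bounded[OF g] Cneg_bounded[OF that(1)] that(3)] that(2)
    by linarith
  show "?below \<and> ?touching"
  proof
    show ?below
    proof
      fix t :: real assume t: "t \<in> {0..1}"
      show "g t \<le> f t"
      proof (rule field_le_epsilon)
        fix e :: real assume "e > 0"
        then obtain h where "h \<in> Cneg" "\<forall>t\<in>{0..1}. h t \<le> f t" "supdist g h < e"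
          using bd unfolding rel_boundary_sup_def by blast
        then show "g t \<le> f t + e" using near t by fastforce
      qed
    qed
    show ?touching
    proof (intro allI impI)
      fix e :: real assume "e > 0"
      then obtain h where h: "h \<in> Cneg" "\<not> (\<forall>t\<in>{0..1}. h t \<le> f t)" "supdist g h < e"
        using bd unfolding rel_boundary_sup_def by blast
      then obtain t where t: "t \<in> {0..1}" "f t < h t" by auto
      moreover have "h t \<le> 0" using h(1) t(1) unfolding Cneg_def by auto
      ultimately show "\<exists>t\<in>{0..1}. f t < 0 \<and> f t < g t + e"
        using near[OF h(1,3) t(1)] by (intro bexI[of _ t]) auto
    qed
  qed
next
  assume below: "?below \<and> ?touching"
  show "g \<in> rel_boundary_sup Cneg {h\<in>Cneg. \<forall>t\<in>{0..1}. h t \<le> f t}"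
    unfolding rel_boundary_sup_def
  proof (intro CollectI conjI allI impI g)
    fix e :: real assume e: "e > 0"
    show "\<exists>h\<in>Cneg \<inter> {h\<in>Cneg. \<forall>t\<in>{0..1}. h t \<le> f t}. supdist g h < e"
      using g below e by (intro bexI[of _ g]) (auto simp: supdist_def)
    obtain t where t: "t \<in> {0..1}" "f t < 0" "f t < g t + e" using below e by blast
    define c where "c = (max (f t - g t) 0 + e) / 2"
    have c: "0 < c" "c < e" "f t - g t < c" using t e unfolding c_def by auto
    \<comment> \<open>lift \<open>g\<close> by less than \<open>e\<close>, just enough to cross \<open>f\<close> at \<open>t\<close>; capping at 0 keeps it in \<open>C\<^sup>-\<close>\<close>
    define h where "h = (\<lambda>s. min (g s + c) 0)"
    have "h \<in> Cneg" using g unfolding h_def Cneg_def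
      by (auto intro!: continuous_on_min continuous_on_add continuous_on_const)
    moreover have "\<not> (\<forall>t\<in>{0..1}. h t \<le> f t)" using t c unfolding h_def by force
    moreover have "supdist g h \<le> c" unfolding supdist_def
    proof (rule cSUP_least)
      fix s :: real assume "s \<in> {0..1}"
      then have "g s \<le> 0" using g unfolding Cneg_def by auto
      then show "\<bar>g s - h s\<bar> \<le> c" unfolding h_def using c by auto
    qed auto
    ultimately show "\<exists>h\<in>Cneg - {h\<in>Cneg. \<forall>t\<in>{0..1}. h t \<le> f t}. supdist g h < e"
      using c by (intro bexI[of _ h]) auto
  qed
qed

lemma rel_boundary_sup_le_iff_sample_points:
  assumes g: "g \<in> Cneg"
  shows "g \<in> rel_boundary_sup Cneg {h\<in>Cneg. \<forall>t\<in>{0..1}. h t \<le> f t} \<longleftrightarrow>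
    (\<forall>t\<in>sample_points f. g t \<le> f t) \<and>
    (\<forall>e\<in>\<rat> \<inter> {0<..}. \<exists>t\<in>sample_points f. max (f t) (f t - g t - e) < 0)"
proof -
  have gc: "continuous_on {0..1} g" using g unfolding Cneg_def by simp
  have touch: "(\<exists>t\<in>{0..1}. f t < 0 \<and> f t < g t + e) \<longleftrightarrow>
      (\<exists>t\<in>sample_points f. max (f t) (f t - g t - e) < 0)" for e
  proof -
    have "(\<exists>t\<in>{0..1}. max (f t) (f t - g t - e) < 0) \<longleftrightarrow>
        (\<exists>t\<in>sample_points f. max (f t) (f t - g t - e) < 0)"
      using gc by (intro ex_less_iff_ex_less_sample_points continuous_max continuous_diff
          continuous_const) (auto simp: continuous_on_eq_continuous_within)
    then show ?thesis by auto
  qed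
  have "(\<forall>e>0. \<exists>t\<in>{0..1}. f t < 0 \<and> f t < g t + e) \<longleftrightarrow>
      (\<forall>e\<in>\<rat> \<inter> {0<..}. \<exists>t\<in>{0..1}. f t < 0 \<and> f t < g t + e)"
  proof (intro iffI allI impI ballI)
    fix e :: real assume all_Rats: "\<forall>e\<in>\<rat> \<inter> {0<..}. \<exists>t\<in>{0..1}. f t < 0 \<and> f t < g t + e"
      and "e > 0"
    obtain r where r: "r \<in> \<rat>" "0 < r" "r < e" using Rats_dense_in_real \<open>e > 0\<close> by blast
    then obtain t where "t \<in> {0..1}" "f t < 0" "f t < g t + r" using all_Rats by blast
    then show "\<exists>t\<in>{0..1}. f t < 0 \<and> f t < g t + e" using r(3) by (intro bexI[of _ t]) auto
  qed auto
  then show ?thesis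
    using rel_boundary_sup_le_iff[OF g] le_iff_le_on_sample_points[OF gc] touch by simp
qed

section \<open>Events of a process with paths in \<open>C\<^sup>-\<close>\<close>

context
  fixes M :: "'a measure" and eta :: "'a \<Rightarrow> real \<Rightarrow> real"
  assumes measurable_coordinate: "\<And>t. t \<in> {0..1} \<Longrightarrow> (\<lambda>\<omega>. eta \<omega> t) \<in> borel_measurable M"
    and paths_Cneg: "\<And>\<omega>. \<omega> \<in> space M \<Longrightarrow> eta \<omega> \<in> Cneg"
begin

lemma continuous_path: "\<omega> \<in> space M \<Longrightarrow> continuous_on {0..1} (eta \<omega>)"
  using paths_Cneg unfolding Cneg_def by blast

lemma sets_Collect_le_fun:
  assumes "E01 f"
  shows "{\<omega>\<in>space M. \<forall>t\<in>{0..1}. eta \<omega> t \<le> f t} \<in> sets M"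
proof -
  have "{\<omega>\<in>space M. \<forall>t\<in>{0..1}. eta \<omega> t \<le> f t} = {\<omega>\<in>space M. \<forall>t\<in>sample_points f. eta \<omega> t \<le> f t}"
    using le_iff_le_on_sample_points[OF continuous_path] by blast
  also have "\<dots> \<in> sets M"
  proof (rule sets.sets_Collect_countable_All'[OF _ countable_sample_points[OF assms]])
    fix t assume "t \<in> sample_points f"
    then have "(\<lambda>\<omega>. eta \<omega> t) \<in> borel_measurable M"
      using measurable_coordinate sample_points_subset by blast
    then show "{\<omega>\<in>space M. eta \<omega> t \<le> f t} \<in> sets M" by measurable
  qed
  finally show ?thesis .
qed

lemma sets_Collect_less_fun:
  assumes f: "E01 f"
  shows "{\<omega>\<in>space M. \<forall>t\<in>{0..1}. eta \<omega> t < f t} \<in> sets M"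
proof -
  let ?D = "discontinuities f"
  let ?I = "{(a, b)\<in>\<rat> \<times> \<rat>. {a..b} \<subseteq> {0..1} - ?D}"
  have "(\<forall>t\<in>{0..1}. eta \<omega> t < f t) \<longleftrightarrow> (\<forall>t\<in>?D. eta \<omega> t < f t) \<and>
      (\<forall>p\<in>?I. \<exists>q\<in>\<rat> \<inter> {0<..}. \<forall>s\<in>\<rat> \<inter> {fst p..snd p}. q \<le> f s - eta \<omega> s)"
    if "\<omega> \<in> space M" for \<omega>
    using less_iff_on_Rats_intervals[OF continuous_path[OF that] E01_finite_discontinuities[OF f]]
    by (simp add: case_prod_beta)
  then have "{\<omega>\<in>space M. \<forall>t\<in>{0..1}. eta \<omega> t < f t} =
      {\<omega>\<in>space M. (\<forall>t\<in>?D. eta \<omega> t < f t) \<and>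
        (\<forall>p\<in>?I. \<exists>q\<in>\<rat> \<inter> {0<..}. \<forall>s\<in>\<rat> \<inter> {fst p..snd p}. q \<le> f s - eta \<omega> s)}"
    by blast
  also have "\<dots> \<in> sets M"
  proof (intro sets.sets_Collect_conj sets.sets_Collect_countable_All' sets.sets_Collect_countable_Ex')
    have "countable (\<rat> \<times> \<rat> :: (real \<times> real) set)" by (intro countable_SIGMA countable_rat)
    then show "countable ?I" by (rule countable_subset[rotated]) auto
    show "countable ?D" using E01_finite_discontinuities[OF f] by (rule countable_finite)
    show "countable (\<rat> \<inter> {0<..} :: real set)" "countable (\<rat> \<inter> {fst p..snd p} :: real set)" for p
      by (auto intro: countable_Int1 countable_rat)
    fix t assume "t \<in> ?D"
    then have "(\<lambda>\<omega>. eta \<omega> t) \<in> borel_measurable M"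
      using measurable_coordinate unfolding discontinuities_def by blast
    then show "{\<omega>\<in>space M. eta \<omega> t < f t} \<in> sets M" by measurable
  next
    fix p :: "real \<times> real" and q s assume "p \<in> ?I" "s \<in> \<rat> \<inter> {fst p..snd p}"
    then have "(\<lambda>\<omega>. eta \<omega> s) \<in> borel_measurable M"
      using measurable_coordinate by fastforce
    then show "{\<omega>\<in>space M. q \<le> f s - eta \<omega> s} \<in> sets M" by measurable
  qed
  finally show ?thesis .
qed

lemma sets_Collect_rel_boundary_sup_le:
  assumes f: "E01 f"
  shows "{\<omega>\<in>space M. eta \<omega> \<in> rel_boundary_sup Cneg {g\<in>Cneg. \<forall>t\<in>{0..1}. g t \<le> f t}} \<in> sets M"
proof -
  have "{\<omega>\<in>space M. eta \<omega> \<in> rel_boundary_sup Cneg {g\<in>Cneg. \<forall>t\<in>{0..1}. g t \<le> f t}} =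
      {\<omega>\<in>space M. (\<forall>t\<in>sample_points f. eta \<omega> t \<le> f t) \<and>
        (\<forall>e\<in>\<rat> \<inter> {0<..}. \<exists>t\<in>sample_points f. max (f t) (f t - eta \<omega> t - e) < 0)}"
    using rel_boundary_sup_le_iff_sample_points[OF paths_Cneg] by blast
  also have "\<dots> \<in> sets M"
  proof (intro sets.sets_Collect_conj sets.sets_Collect_countable_All' sets.sets_Collect_countable_Ex'
      countable_sample_points[OF f])
    show "countable (\<rat> \<inter> {0<..} :: real set)" by (auto intro: countable_Int1 countable_rat)
  next
    fix t assume "t \<in> sample_points f"
    then have "(\<lambda>\<omega>. eta \<omega> t) \<in> borel_measurable M"
      using measurable_coordinate sample_points_subset by blast
    then show "{\<omega>\<in>space M. eta \<omega> t \<le> f t} \<in> sets M"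
      and "{\<omega>\<in>space M. max (f t) (f t - eta \<omega> t - e) < 0} \<in> sets M" for e
      by measurable
  qed
  finally show ?thesis .
qed

context
  assumes prob: "prob_space M"
begin

lemma measure_le_fun_eq_measure_less_fun:
  assumes f: "E01 f"
    and right_cont: "((\<lambda>\<epsilon>. measure M {\<omega>\<in>space M. \<forall>t\<in>{0..1}. eta \<omega> t \<le> f t - \<epsilon>})
      \<longlongrightarrow> measure M {\<omega>\<in>space M. \<forall>t\<in>{0..1}. eta \<omega> t \<le> f t}) (at_right 0)"
  shows "measure M {\<omega>\<in>space M. \<forall>t\<in>{0..1}. eta \<omega> t \<le> f t} =
    measure M {\<omega>\<in>space M. \<forall>t\<in>{0..1}. eta \<omega> t < f t}"
proof (rule antisym)
  interpret prob_space M by (fact prob)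
  let ?less = "{\<omega>\<in>space M. \<forall>t\<in>{0..1}. eta \<omega> t < f t}"
  have "\<forall>\<^sub>F \<epsilon> in at_right 0.
      measure M {\<omega>\<in>space M. \<forall>t\<in>{0..1}. eta \<omega> t \<le> f t - \<epsilon>} \<le> measure M ?less"
    using eventually_at_right_less
  proof eventually_elim
    case (elim \<epsilon>)
    then show ?case
      using sets_Collect_less_fun[OF f] by (intro finite_measure_mono) fastforce+
  qed
  then show "measure M {\<omega>\<in>space M. \<forall>t\<in>{0..1}. eta \<omega> t \<le> f t} \<le> measure M ?less"
    using tendsto_le[OF _ tendsto_const right_cont] by simp
  show "measure M ?less \<le> measure M {\<omega>\<in>space M. \<forall>t\<in>{0..1}. eta \<omega> t \<le> f t}"
    using sets_Collect_le_fun[OF f] by (intro finite_measure_mono) auto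
qed

lemma measure_rel_boundary_sup_le_eq_0:
  assumes f: "E01 f"
    and right_cont: "((\<lambda>\<epsilon>. measure M {\<omega>\<in>space M. \<forall>t\<in>{0..1}. eta \<omega> t \<le> f t - \<epsilon>})
      \<longlongrightarrow> measure M {\<omega>\<in>space M. \<forall>t\<in>{0..1}. eta \<omega> t \<le> f t}) (at_right 0)"
  shows "measure M {\<omega>\<in>space M. eta \<omega> \<in> rel_boundary_sup Cneg {g\<in>Cneg. \<forall>t\<in>{0..1}. g t \<le> f t}} = 0"
proof -
  interpret prob_space M by (fact prob)
  let ?B = "{\<omega>\<in>space M. eta \<omega> \<in> rel_boundary_sup Cneg {g\<in>Cneg. \<forall>t\<in>{0..1}. g t \<le> f t}}"
  let ?P = "\<lambda>\<epsilon>. measure M {\<omega>\<in>space M. \<forall>t\<in>{0..1}. eta \<omega> t \<le> f t - \<epsilon>}"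
  have "measure M ?B \<le> ?P 0 - ?P \<epsilon>" if "\<epsilon> > 0" for \<epsilon>
  proof -
    let ?le = "\<lambda>\<epsilon>. {\<omega>\<in>space M. \<forall>t\<in>{0..1}. eta \<omega> t \<le> f t - \<epsilon>}"
    have sets: "?le 0 \<in> sets M" "?le \<epsilon> \<in> sets M"
      using sets_Collect_le_fun[OF f] sets_Collect_le_fun[OF E01_diff_const[OF f]] by simp_all
    \<comment> \<open>on the boundary \<open>\<eta>\<close> comes within \<open>\<epsilon>\<close> of \<open>f\<close> somewhere\<close>
    have "?B \<subseteq> ?le 0 - ?le \<epsilon>"
      using rel_boundary_sup_le_iff[OF paths_Cneg] that by fastforce
    then have "measure M ?B \<le> measure M (?le 0 - ?le \<epsilon>)"
      using sets by (intro finite_measure_mono) auto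
    also have "\<dots> = ?P 0 - ?P \<epsilon>"
      using sets that by (intro finite_measure_Diff) auto
    finally show ?thesis .
  qed
  then have "\<forall>\<^sub>F \<epsilon> in at_right 0. measure M ?B \<le> ?P 0 - ?P \<epsilon>"
    using eventually_at_right_less by (rule eventually_mono[rotated]) simp
  moreover have "((\<lambda>\<epsilon>. ?P 0 - ?P \<epsilon>) \<longlongrightarrow> 0) (at_right 0)"
    using tendsto_diff[OF tendsto_const right_cont, of "?P 0"] by simp
  ultimately have "measure M ?B \<le> 0"
    by (intro tendsto_le[OF trivial_limit_at_right_real _ tendsto_const])
  then show ?thesis using measure_nonneg[of M ?B] by linarith
qed

end

end

section \<open>The D-norm is Lipschitz\<close>

definition weighted_sup :: "('b \<Rightarrow> real \<Rightarrow> real) \<Rightarrow> (real \<Rightarrow> real) \<Rightarrow> 'b \<Rightarrow> real" where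
  "weighted_sup Z f \<omega> = (SUP t\<in>{0..1}. \<bar>f t\<bar> * Z \<omega> t)"

lemma Dnorm_eq_integral_weighted_sup: "Dnorm N Z f = (\<integral>\<omega>. weighted_sup Z f \<omega> \<partial>N)"
  unfolding Dnorm_def weighted_sup_def ..

context
  fixes N :: "'b measure" and Z :: "'b \<Rightarrow> real \<Rightarrow> real" and m :: real
  assumes gen: "generator N Z m"
begin

lemma generator_prob_space: "prob_space N"
  and generator_sup_ge_1: "1 \<le> m"
  and generator_continuous_path: "\<omega> \<in> space N \<Longrightarrow> continuous_on {0..1} (Z \<omega>)"
  and generator_path_nonneg: "\<omega> \<in> space N \<Longrightarrow> t \<in> {0..1} \<Longrightarrow> 0 \<le> Z \<omega> t"
  and AE_generator_sup_eq: "AE \<omega> in N. (SUP t\<in>{0..1}. Z \<omega> t) = m"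
  and generator_measurable_coordinate: "t \<in> {0..1} \<Longrightarrow> (\<lambda>\<omega>. Z \<omega> t) \<in> borel_measurable N"
  using gen unfolding generator_def by auto

lemma generator_path_le_sup:
  assumes "\<omega> \<in> space N" "t \<in> {0..1}"
  shows "Z \<omega> t \<le> (SUP s\<in>{0..1}. Z \<omega> s)"
proof -
  have "compact (Z \<omega> ` {0..1})"
    using generator_continuous_path[OF assms(1)] by (intro compact_continuous_image) auto
  then show ?thesis
    using assms(2) by (intro cSUP_upper bounded_imp_bdd_above compact_imp_bounded)
qed

lemma weighted_term_le:
  assumes "\<omega> \<in> space N" "t \<in> {0..1}" "\<bar>f t\<bar> \<le> B"
  shows "\<bar>f t\<bar> * Z \<omega> t \<le> B * (SUP s\<in>{0..1}. Z \<omega> s)"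
  using assms(3) generator_path_nonneg[OF assms(1,2)] generator_path_le_sup[OF assms(1,2)]
  by (intro mult_mono) auto

lemma bdd_above_weighted_terms:
  assumes "E01 f" "\<omega> \<in> space N"
  shows "bdd_above ((\<lambda>t. \<bar>f t\<bar> * Z \<omega> t) ` {0..1})"
proof -
  obtain B where "\<And>t. t \<in> {0..1} \<Longrightarrow> \<bar>f t\<bar> \<le> B" using E01_obtain_bound[OF assms(1)] by blast
  then show ?thesis using weighted_term_le[OF assms(2)] by (intro bdd_aboveI2) blast
qed

lemma weighted_term_le_weighted_sup:
  "E01 f \<Longrightarrow> \<omega> \<in> space N \<Longrightarrow> t \<in> {0..1} \<Longrightarrow> \<bar>f t\<bar> * Z \<omega> t \<le> weighted_sup Z f \<omega>"
  unfolding weighted_sup_def by (intro cSUP_upper bdd_above_weighted_terms)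

lemma weighted_sup_nonneg:
  assumes "E01 f" "\<omega> \<in> space N"
  shows "0 \<le> weighted_sup Z f \<omega>"
proof -
  have "0 \<le> \<bar>f 0\<bar> * Z \<omega> 0" using generator_path_nonneg[OF assms(2)] by simp
  also have "\<dots> \<le> weighted_sup Z f \<omega>" using weighted_term_le_weighted_sup[OF assms] by simp
  finally show ?thesis .
qed

lemma weighted_sup_le_plus_supdist:
  assumes f: "E01 f" and g: "E01 g" and \<omega>: "\<omega> \<in> space N"
  shows "weighted_sup Z g \<omega> \<le> weighted_sup Z f \<omega> + supdist g f * (SUP s\<in>{0..1}. Z \<omega> s)"
  unfolding weighted_sup_def[of Z g]
proof (rule cSUP_least)
  fix t :: real assume t: "t \<in> {0..1}"
  have dist: "\<bar>g t - f t\<bar> \<le> supdist g f"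
    using abs_diff_le_supdist[of g f t] f g t unfolding E01_def by simp
  then have "\<bar>g t\<bar> \<le> \<bar>f t\<bar> + supdist g f" by linarith
  then have "\<bar>g t\<bar> * Z \<omega> t \<le> \<bar>f t\<bar> * Z \<omega> t + supdist g f * Z \<omega> t"
    using generator_path_nonneg[OF \<omega> t] by (metis distrib_right mult_right_mono)
  also have "\<dots> \<le> weighted_sup Z f \<omega> + supdist g f * (SUP s\<in>{0..1}. Z \<omega> s)"
    using weighted_term_le_weighted_sup[OF f \<omega> t] generator_path_le_sup[OF \<omega> t] dist
    by (intro add_mono mult_left_mono) auto
  finally show "\<bar>g t\<bar> * Z \<omega> t \<le> weighted_sup Z f \<omega> + supdist g f * (SUP s\<in>{0..1}. Z \<omega> s)" .
qed simp

lemma borel_measurable_weighted_sup: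
  assumes f: "E01 f"
  shows "weighted_sup Z f \<in> borel_measurable N"
proof -
  have "weighted_sup Z f \<omega> = (SUP t\<in>sample_points f. \<bar>f t\<bar> * Z \<omega> t)" if \<omega>: "\<omega> \<in> space N" for \<omega>
    unfolding weighted_sup_def
  proof (rule cSUP_eq_cSUP_sample_points[OF bdd_above_weighted_terms[OF f \<omega>]])
    fix t :: real assume "t \<in> {0..1}" "continuous (at t within {0..1}) f"
    moreover have "continuous_on {0..1} (Z \<omega>)" using generator_continuous_path[OF \<omega>] .
    ultimately show "continuous (at t within {0..1}) (\<lambda>t. \<bar>f t\<bar> * Z \<omega> t)"
      by (intro continuous_mult continuous_rabs) (auto simp: continuous_on_eq_continuous_within)
  qed
  moreover have "(\<lambda>\<omega>. SUP t\<in>sample_points f. \<bar>f t\<bar> * Z \<omega> t) \<in> borel_measurable N"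
  proof (rule borel_measurable_cSUP[OF countable_sample_points[OF f]])
    fix t assume "t \<in> sample_points f"
    then have "(\<lambda>\<omega>. Z \<omega> t) \<in> borel_measurable N"
      using generator_measurable_coordinate sample_points_subset by blast
    then show "(\<lambda>\<omega>. \<bar>f t\<bar> * Z \<omega> t) \<in> borel_measurable N" by measurable
  next
    fix \<omega> assume "\<omega> \<in> space N"
    then show "bdd_above ((\<lambda>t. \<bar>f t\<bar> * Z \<omega> t) ` sample_points f)"
      using bdd_above_weighted_terms[OF f] sample_points_subset by (meson bdd_above_mono image_mono)
  qed
  ultimately show ?thesis by (subst measurable_cong) auto
qed

lemma integrable_weighted_sup:
  assumes f: "E01 f"
  shows "integrable N (weighted_sup Z f)"
proof -
  interpret prob_space N by (fact generator_prob_space)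
  obtain B where B: "B \<ge> 0" "\<And>t. t \<in> {0..1} \<Longrightarrow> \<bar>f t\<bar> \<le> B"
    using E01_obtain_bound[OF f] by blast
  show ?thesis
  proof (rule Bochner_Integration.integrable_bound[where f="\<lambda>_. B * m"])
    show "integrable N (\<lambda>_. B * m)" by simp
    show "weighted_sup Z f \<in> borel_measurable N" by (rule borel_measurable_weighted_sup[OF f])
    show "AE \<omega> in N. norm (weighted_sup Z f \<omega>) \<le> norm (B * m)"
      using AE_generator_sup_eq AE_space
    proof eventually_elim
      case (elim \<omega>)
      have "weighted_sup Z f \<omega> \<le> B * m"
        unfolding weighted_sup_def
      proof (rule cSUP_least)
        fix t :: real assume t: "t \<in> {0..1}"
        show "\<bar>f t\<bar> * Z \<omega> t \<le> B * m"
          using weighted_term_le[of \<omega> t f B] elim B(2)[OF t] t by simp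
      qed simp
      then show ?case
        using weighted_sup_nonneg[OF f elim(2)] B(1) generator_sup_ge_1 by simp
    qed
  qed
qed

lemma Dnorm_nonneg: "E01 f \<Longrightarrow> 0 \<le> Dnorm N Z f"
  unfolding Dnorm_eq_integral_weighted_sup
  by (intro integral_nonneg_AE AE_I2) (simp add: weighted_sup_nonneg)

lemma Dnorm_le_plus_supdist:
  assumes f: "E01 f" and g: "E01 g"
  shows "Dnorm N Z g \<le> Dnorm N Z f + m * supdist g f"
proof -
  interpret prob_space N by (fact generator_prob_space)
  have "AE \<omega> in N. weighted_sup Z g \<omega> \<le> weighted_sup Z f \<omega> + m * supdist g f"
    using AE_generator_sup_eq AE_space
  proof eventually_elim
    case (elim \<omega>)
    then show ?case using weighted_sup_le_plus_supdist[OF f g elim(2)] by (simp add: mult.commute)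
  qed
  then have "(\<integral>\<omega>. weighted_sup Z g \<omega> \<partial>N) \<le> (\<integral>\<omega>. weighted_sup Z f \<omega> + m * supdist g f \<partial>N)"
    using integrable_weighted_sup[OF f] integrable_weighted_sup[OF g] by (intro integral_mono_AE) auto
  also have "\<dots> = (\<integral>\<omega>. weighted_sup Z f \<omega> \<partial>N) + m * supdist g f"
    using integrable_weighted_sup[OF f] by (simp add: prob_space)
  finally show ?thesis unfolding Dnorm_eq_integral_weighted_sup .
qed

lemma abs_exp_neg_Dnorm_diff_le:
  assumes "E01 f" "E01 g"
  shows "\<bar>exp (- Dnorm N Z g) - exp (- Dnorm N Z f)\<bar> \<le> m * supdist g f"
proof -
  have "\<bar>exp (- Dnorm N Z g) - exp (- Dnorm N Z f)\<bar> \<le> \<bar>Dnorm N Z g - Dnorm N Z f\<bar>"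
    using assms by (intro abs_exp_neg_diff_le Dnorm_nonneg)
  also have "\<dots> \<le> m * supdist g f"
    using Dnorm_le_plus_supdist[OF assms] Dnorm_le_plus_supdist[OF assms(2,1)]
    by (simp add: abs_le_iff supdist_commute[of f g])
  finally show ?thesis .
qed

end

lemma tendsto_at_right_diff_const_if_lipschitz:
  fixes G :: "(real \<Rightarrow> real) \<Rightarrow> real"
  assumes f: "f \<in> Eneg" and lip: "\<And>g. g \<in> Eneg \<Longrightarrow> \<bar>G g - G f\<bar> \<le> L * supdist g f"
  shows "((\<lambda>\<epsilon>. G (\<lambda>t. f t - \<epsilon>)) \<longlongrightarrow> G f) (at_right 0)"
proof -
  have "((\<lambda>\<epsilon>. G (\<lambda>t. f t - \<epsilon>) - G f) \<longlongrightarrow> 0) (at_right 0)"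
  proof (rule Lim_null_comparison)
    show "\<forall>\<^sub>F \<epsilon> in at_right 0. norm (G (\<lambda>t. f t - \<epsilon>) - G f) \<le> L * \<epsilon>"
      using eventually_at_right_less
    proof (rule eventually_mono)
      fix \<epsilon> :: real assume "0 < \<epsilon>"
      then show "norm (G (\<lambda>t. f t - \<epsilon>) - G f) \<le> L * \<epsilon>"
        using lip[OF Eneg_diff_const[OF f, of \<epsilon>]] supdist_diff_const[of \<epsilon> f] by simp
    qed
    show "((\<lambda>\<epsilon>. L * \<epsilon>) \<longlongrightarrow> 0) (at_right 0)"
      by (intro tendsto_eq_intros) auto
  qed
  then show ?thesis by (simp add: LIM_zero_iff)
qed

theorem mainTheorem4:
  fixes M :: "'a measure" and eta :: "'a \<Rightarrow> real \<Rightarrow> real"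
    and N :: "'b measure" and Z :: "'b \<Rightarrow> real \<Rightarrow> real" and m :: real
    and G :: "(real \<Rightarrow> real) \<Rightarrow> real"
  assumes gen: "generator N Z m"
    and msp: "std_max_stable M eta N Z"
    and fdf: "\<And>f. f \<in> Eneg \<Longrightarrow>
               measure M {\<omega>\<in>space M. \<forall>t\<in>{0..1}. eta \<omega> t \<le> f t} = exp (- Dnorm N Z f)"
    and G_def: "\<And>f. G f = measure M {\<omega>\<in>space M. \<forall>t\<in>{0..1}. eta \<omega> t \<le> f t}"
  shows "(\<forall>f\<in>Eneg. \<forall>e>0. \<exists>\<delta>>0. \<forall>g\<in>Eneg. supdist g f < \<delta> \<longrightarrow> \<bar>G g - G f\<bar> < e)
       \<and> (\<forall>f\<in>Eneg. {\<omega>\<in>space M. \<forall>t\<in>{0..1}. eta \<omega> t < f t} \<in> sets M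
             \<and> measure M {\<omega>\<in>space M. \<forall>t\<in>{0..1}. eta \<omega> t \<le> f t}
               = measure M {\<omega>\<in>space M. \<forall>t\<in>{0..1}. eta \<omega> t < f t})
       \<and> (\<forall>f\<in>Eneg.
             {\<omega>\<in>space M. eta \<omega> \<in> rel_boundary_sup Cneg {g\<in>Cneg. \<forall>t\<in>{0..1}. g t \<le> f t}} \<in> sets M
           \<and> measure M {\<omega>\<in>space M. eta \<omega> \<in> rel_boundary_sup Cneg {g\<in>Cneg. \<forall>t\<in>{0..1}. g t \<le> f t}} = 0)"
proof -
  have M: "prob_space M" and coordinate: "\<And>t. t \<in> {0..1} \<Longrightarrow> (\<lambda>\<omega>. eta \<omega> t) \<in> borel_measurable M"
    and paths: "\<And>\<omega>. \<omega> \<in> space M \<Longrightarrow> eta \<omega> \<in> Cneg"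
    using msp unfolding std_max_stable_def by auto
  have E01: "E01 f" if "f \<in> Eneg" for f using that unfolding Eneg_def by blast
  have lip: "\<bar>G g - G f\<bar> \<le> m * supdist g f" if "f \<in> Eneg" "g \<in> Eneg" for f g
    using abs_exp_neg_Dnorm_diff_le[OF gen E01[OF that(1)] E01[OF that(2)]]
    unfolding G_def fdf[OF that(1)] fdf[OF that(2)] .
  have right_cont: "((\<lambda>\<epsilon>. measure M {\<omega>\<in>space M. \<forall>t\<in>{0..1}. eta \<omega> t \<le> f t - \<epsilon>})
      \<longlongrightarrow> measure M {\<omega>\<in>space M. \<forall>t\<in>{0..1}. eta \<omega> t \<le> f t}) (at_right 0)" if "f \<in> Eneg" for f
    using tendsto_at_right_diff_const_if_lipschitz[OF that lip[OF that]] unfolding G_def .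
  have "m > 0" using generator_sup_ge_1[OF gen] by simp
  show ?thesis
  proof (intro conjI ballI allI impI)
    fix f and e :: real assume "f \<in> Eneg" "e > 0"
    show "\<exists>\<delta>>0. \<forall>g\<in>Eneg. supdist g f < \<delta> \<longrightarrow> \<bar>G g - G f\<bar> < e"
    proof (intro exI[of _ "e / m"] conjI ballI impI)
      fix g assume "g \<in> Eneg" "supdist g f < e / m"
      then show "\<bar>G g - G f\<bar> < e"
        using lip[OF \<open>f \<in> Eneg\<close>] \<open>m > 0\<close> by (smt (verit) pos_less_divide_eq mult.commute)
    qed (use \<open>e > 0\<close> \<open>m > 0\<close> in simp)
  qed (use sets_Collect_less_fun[OF coordinate paths]
      sets_Collect_rel_boundary_sup_le[OF coordinate paths]
      measure_le_fun_eq_measure_less_fun[OF coordinate paths M]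
      measure_rel_boundary_sup_le_eq_0[OF coordinate paths M]
      E01 right_cont in auto)
qed

end
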